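(* There are uncountably many minor-closed classes $\mathcal{C}$ of countable graphs that have a universal element, and uncountably many minor-closed classes of countable graphs that do not have a universal element.
   Context: Graphs may be infinite (countable). A graph $H$ is a minor of a graph $G$ if there are pairwise disjoint connected subgraphs $B_v\subseteq G$, $v\in V(H)$, and for every edge $uv\in E(H)$ an edge of $G$ with one endvertex in $B_u$ and the other in $B_v$. A class $\mathcal{C}$ is minor-closed if every minor of a member of $\mathcal{C}$ is in $\mathcal{C}$. A universal element of $\mathcal{C}$ is a graph $U\in\mathcal{C}$ such that every $G\in\mathcal{C}$ is a minor of $U$. *)

theory Defs
  imports Main "HOL-Library.Countable_Set"
begin

text \<open>A countable graph is represented by a vertex set V \<subseteq> nat and a symmetric,
irreflexive edge relation E supported on V.  Every countable graph is isomorphic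
to such a graph, and minor-closed classes are closed under isomorphism.\<close>

type_synonym cgraph = "nat set \<times> (nat \<Rightarrow> nat \<Rightarrow> bool)"

definition is_graph :: "cgraph \<Rightarrow> bool" where
  "is_graph G \<longleftrightarrow>
     (\<forall>a b. snd G a b \<longrightarrow> a \<in> fst G \<and> b \<in> fst G) \<and>
     (\<forall>a b. snd G a b \<longrightarrow> snd G b a) \<and>
     (\<forall>a. \<not> snd G a a)"

definition connected_in :: "cgraph \<Rightarrow> nat set \<Rightarrow> bool" where
  "connected_in G B \<longleftrightarrow> B \<noteq> {} \<and> B \<subseteq> fst G \<and>
     (\<forall>x\<in>B. \<forall>y\<in>B. (\<lambda>a b. a \<in> B \<and> b \<in> B \<and> snd G a b)\<^sup>*\<^sup>* x y)"

definition is_minor :: "cgraph \<Rightarrow> cgraph \<Rightarrow> bool" where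
  "is_minor H G \<longleftrightarrow> (\<exists>branch :: nat \<Rightarrow> nat set.
     (\<forall>v\<in>fst H. connected_in G (branch v)) \<and>
     (\<forall>u\<in>fst H. \<forall>v\<in>fst H. u \<noteq> v \<longrightarrow> branch u \<inter> branch v = {}) \<and>
     (\<forall>u\<in>fst H. \<forall>v\<in>fst H. snd H u v \<longrightarrow>
        (\<exists>a\<in>branch u. \<exists>b\<in>branch v. snd G a b)))"

definition minor_closed :: "cgraph set \<Rightarrow> bool" where
  "minor_closed C \<longleftrightarrow> C \<subseteq> Collect is_graph \<and>
     (\<forall>G\<in>C. \<forall>H. is_graph H \<and> is_minor H G \<longrightarrow> H \<in> C)"

definition has_universal :: "cgraph set \<Rightarrow> bool" where
  "has_universal C \<longleftrightarrow> (\<exists>U\<in>C. \<forall>G\<in>C. is_minor G U)"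

end

theory Submission
  imports Defs "HOL-Library.Nat_Bijection"
begin

text \<open>Call a countable graph dissectable if deleting some finite vertex set leaves only
  dissectable components.  Dissectable graphs form a minor-closed class that is closed under
  countable disjoint unions, and for every dissectable \<open>W\<close> some dissectable graph is not a
  minor of \<open>W\<close>.  Hence no countable family of dissectable graphs contains every dissectable
  graph as a minor of a member: a dissectable graph that is not a minor of the disjoint union
  of the family is missed.  Both the class of minors of a dissectable \<open>W\<close> (which has \<open>W\<close> as
  universal element) and the union of the classes of minors along a chain \<open>W = W\<^sub>0, W\<^sub>1, \<dots>\<close>
  in which no \<open>W\<^sub>n\<^sub>+\<^sub>1\<close> is a minor of \<open>W\<^sub>n\<close> (which has no universal element) contain \<open>W\<close>
  and lie below countably many dissectable graphs.  So countably many classes of either kind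
  would produce a forbidden countable family.\<close>

definition minor_model :: "cgraph \<Rightarrow> (nat \<Rightarrow> nat set) \<Rightarrow> cgraph \<Rightarrow> bool" where
  "minor_model H \<beta> G \<longleftrightarrow>
     (\<forall>v\<in>fst H. connected_in G (\<beta> v)) \<and>
     (\<forall>u\<in>fst H. \<forall>v\<in>fst H. u \<noteq> v \<longrightarrow> \<beta> u \<inter> \<beta> v = {}) \<and>
     (\<forall>u\<in>fst H. \<forall>v\<in>fst H. snd H u v \<longrightarrow> (\<exists>a\<in>\<beta> u. \<exists>b\<in>\<beta> v. snd G a b))"

lemma is_minor_iff_minor_model: "is_minor H G \<longleftrightarrow> (\<exists>\<beta>. minor_model H \<beta> G)"
  unfolding is_minor_def minor_model_def ..

lemma minor_modelD:
  assumes "minor_model H \<beta> G"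
  shows "v \<in> fst H \<Longrightarrow> connected_in G (\<beta> v)"
    and "u \<in> fst H \<Longrightarrow> v \<in> fst H \<Longrightarrow> u \<noteq> v \<Longrightarrow> \<beta> u \<inter> \<beta> v = {}"
    and "u \<in> fst H \<Longrightarrow> v \<in> fst H \<Longrightarrow> snd H u v \<Longrightarrow> \<exists>a\<in>\<beta> u. \<exists>b\<in>\<beta> v. snd G a b"
  using assms unfolding minor_model_def by blast+

lemma is_graphI:
  assumes "\<And>a b. snd G a b \<Longrightarrow> a \<in> fst G \<and> b \<in> fst G \<and> snd G b a" and "\<And>a. \<not> snd G a a"
  shows "is_graph G"
  using assms unfolding is_graph_def by blast

lemma is_graph_edgeD: "is_graph G \<Longrightarrow> snd G a b \<Longrightarrow> a \<in> fst G \<and> b \<in> fst G"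
  unfolding is_graph_def by blast

definition empty_graph :: cgraph where
  "empty_graph = ({}, \<lambda>_ _. False)"

lemma is_graph_empty_graph: "is_graph empty_graph"
  by (simp add: is_graph_def empty_graph_def)

definition induced :: "cgraph \<Rightarrow> nat set \<Rightarrow> cgraph" where
  "induced G S = (S, \<lambda>a b. a \<in> S \<and> b \<in> S \<and> snd G a b)"

lemma is_graph_induced: "is_graph G \<Longrightarrow> is_graph (induced G S)"
  unfolding is_graph_def induced_def by auto

lemma is_minor_if_embedding:
  assumes "inj_on h (fst H)" "h ` fst H \<subseteq> fst G"
    and "\<And>u v. u \<in> fst H \<Longrightarrow> v \<in> fst H \<Longrightarrow> snd H u v \<Longrightarrow> snd G (h u) (h v)"
  shows "is_minor H G"
  unfolding is_minor_def
  using assms by (intro exI[of _ "\<lambda>v. {h v}"]) (auto simp: connected_in_def inj_on_def)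

lemma is_minor_refl: "is_minor G G"
  by (rule is_minor_if_embedding[of id]) auto

lemma connected_in_induced:
  assumes "connected_in G B" "B \<subseteq> S"
  shows "connected_in (induced G S) B"
proof -
  have "(\<lambda>a b. a \<in> B \<and> b \<in> B \<and> snd (induced G S) a b) = (\<lambda>a b. a \<in> B \<and> b \<in> B \<and> snd G a b)"
    using assms(2) unfolding induced_def by auto
  with assms show ?thesis
    unfolding connected_in_def by (simp add: induced_def)
qed

lemma connected_in_UN:
  assumes B: "connected_in G B" and \<gamma>: "\<And>w. w \<in> B \<Longrightarrow> connected_in K (\<gamma> w)"
    and edges: "\<And>w w'. w \<in> B \<Longrightarrow> w' \<in> B \<Longrightarrow> snd G w w' \<Longrightarrow> \<exists>p\<in>\<gamma> w. \<exists>q\<in>\<gamma> w'. snd K p q"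
  shows "connected_in K (\<Union>(\<gamma> ` B))"
proof -
  define U where "U = \<Union>(\<gamma> ` B)"
  define S where "S = (\<lambda>a b. a \<in> U \<and> b \<in> U \<and> snd K a b)"
  have inside: "S\<^sup>*\<^sup>* y z" if "w \<in> B" "y \<in> \<gamma> w" "z \<in> \<gamma> w" for w y z
  proof -
    have "(\<lambda>a b. a \<in> \<gamma> w \<and> b \<in> \<gamma> w \<and> snd K a b)\<^sup>*\<^sup>* y z"
      using \<gamma>[OF that(1)] that(2,3) unfolding connected_in_def by blast
    moreover have "(\<lambda>a b. a \<in> \<gamma> w \<and> b \<in> \<gamma> w \<and> snd K a b) \<le> S"
      using that(1) unfolding S_def U_def by blast
    ultimately show ?thesis
      using rtranclp_mono by blast
  qed
  have across: "\<forall>y\<in>\<gamma> w. \<forall>z\<in>\<gamma> w'. S\<^sup>*\<^sup>* y z"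
    if "(\<lambda>a b. a \<in> B \<and> b \<in> B \<and> snd G a b)\<^sup>*\<^sup>* w w'" "w \<in> B" for w w'
    using that(1)
  proof (induction rule: rtranclp_induct)
    case base
    then show ?case using inside that(2) by blast
  next
    case (step w' w'')
    then obtain p q where pq: "p \<in> \<gamma> w'" "q \<in> \<gamma> w''" "snd K p q"
      using edges by blast
    with step have "S p q"
      unfolding S_def U_def by blast
    with step.IH pq inside[of w''] step.hyps(2) show ?case
      by (meson converse_rtranclp_into_rtranclp rtranclp_trans)
  qed
  have "U \<noteq> {}" "U \<subseteq> fst K"
    using B \<gamma> unfolding U_def connected_in_def by fastforce+
  moreover have "S\<^sup>*\<^sup>* y z" if "y \<in> U" "z \<in> U" for y z
    using that across B unfolding U_def connected_in_def by blast
  ultimately show ?thesis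
    unfolding connected_in_def S_def U_def by blast
qed

lemma minor_model_trans:
  assumes \<beta>: "minor_model H \<beta> G" and \<gamma>: "minor_model G \<gamma> K"
  shows "minor_model H (\<lambda>v. \<Union>(\<gamma> ` \<beta> v)) K"
proof -
  have sub: "\<beta> v \<subseteq> fst G" if "v \<in> fst H" for v
    using minor_modelD(1)[OF \<beta> that] unfolding connected_in_def by blast
  show ?thesis
    unfolding minor_model_def
  proof (intro conjI ballI impI)
    fix v assume "v \<in> fst H"
    with sub show "connected_in K (\<Union>(\<gamma> ` \<beta> v))"
      by (intro connected_in_UN[where G = G] minor_modelD[OF \<beta>] minor_modelD[OF \<gamma>]) blast+
  next
    fix u v assume "u \<in> fst H" "v \<in> fst H" "u \<noteq> v"
    then have "\<beta> u \<inter> \<beta> v = {}" "\<beta> u \<subseteq> fst G" "\<beta> v \<subseteq> fst G"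
      using minor_modelD(2)[OF \<beta>] sub by auto
    then show "\<Union>(\<gamma> ` \<beta> u) \<inter> \<Union>(\<gamma> ` \<beta> v) = {}"
      using minor_modelD(2)[OF \<gamma>] by blast
  next
    fix u v assume "u \<in> fst H" "v \<in> fst H" "snd H u v"
    then obtain a b where "a \<in> \<beta> u" "b \<in> \<beta> v" "snd G a b"
      using minor_modelD(3)[OF \<beta>] by blast
    with \<open>u \<in> fst H\<close> \<open>v \<in> fst H\<close> sub show "\<exists>a\<in>\<Union>(\<gamma> ` \<beta> u). \<exists>b\<in>\<Union>(\<gamma> ` \<beta> v). snd K a b"
      using minor_modelD(3)[OF \<gamma>, of a b] by blast
  qed
qed

lemma is_minor_trans [trans]: "is_minor H G \<Longrightarrow> is_minor G K \<Longrightarrow> is_minor H K"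
  unfolding is_minor_iff_minor_model using minor_model_trans by blast

definition component_avoiding :: "cgraph \<Rightarrow> nat set \<Rightarrow> nat \<Rightarrow> nat set" where
  "component_avoiding G X x = {y. (\<lambda>u v. u \<notin> X \<and> v \<notin> X \<and> snd G u v)\<^sup>*\<^sup>* x y}"

lemma component_avoiding_self: "x \<in> component_avoiding G X x"
  by (simp add: component_avoiding_def)

lemma component_avoiding_step:
  "y \<in> component_avoiding G X x \<Longrightarrow> y \<notin> X \<Longrightarrow> z \<notin> X \<Longrightarrow> snd G y z \<Longrightarrow>
   z \<in> component_avoiding G X x"
  unfolding component_avoiding_def by (simp add: rtranclp.rtrancl_into_rtrancl)

lemma component_avoiding_induct [consumes 1, case_names base step]:
  assumes "y \<in> component_avoiding G X x" and "P x"
    and "\<And>u v. P u \<Longrightarrow> u \<notin> X \<Longrightarrow> v \<notin> X \<Longrightarrow> snd G u v \<Longrightarrow> P v"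
  shows "P y"
proof -
  have "(\<lambda>u v. u \<notin> X \<and> v \<notin> X \<and> snd G u v)\<^sup>*\<^sup>* x y"
    using assms(1) by (simp add: component_avoiding_def)
  then show ?thesis
    by (induction rule: rtranclp_induct) (use assms(2,3) in blast)+
qed

lemma connected_in_subset_component_avoiding:
  assumes B: "connected_in G B" and "B \<inter> X = {}" and b: "b \<in> B" "b \<in> component_avoiding G X x"
  shows "B \<subseteq> component_avoiding G X x"
proof
  fix y assume "y \<in> B"
  with B b(1) have "(\<lambda>a c. a \<in> B \<and> c \<in> B \<and> snd G a c)\<^sup>*\<^sup>* b y"
    unfolding connected_in_def by blast
  then show "y \<in> component_avoiding G X x"
    by (induction rule: rtranclp_induct)
      (use b(2) \<open>B \<inter> X = {}\<close> component_avoiding_step in blast)+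
qed

inductive dissectable :: "cgraph \<Rightarrow> bool" where
  "is_graph G \<Longrightarrow> finite X \<Longrightarrow>
   (\<And>x. x \<in> fst G \<Longrightarrow> x \<notin> X \<Longrightarrow> dissectable (induced G (component_avoiding G X x))) \<Longrightarrow>
   dissectable G"

lemma dissectable_is_graph: "dissectable G \<Longrightarrow> is_graph G"
  by (erule dissectable.cases) auto

lemma dissectable_empty_graph: "dissectable empty_graph"
  by (rule dissectable.intros[OF is_graph_empty_graph, of "{}"]) (auto simp: empty_graph_def)

lemma finite_branch_sets_meeting:
  assumes \<beta>: "minor_model H \<beta> G" and "finite X"
  shows "finite {v \<in> fst H. \<beta> v \<inter> X \<noteq> {}} \<and> card {v \<in> fst H. \<beta> v \<inter> X \<noteq> {}} \<le> card X"
proof -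
  define Y where "Y = {v \<in> fst H. \<beta> v \<inter> X \<noteq> {}}"
  have "\<forall>v\<in>Y. \<exists>x. x \<in> \<beta> v \<inter> X"
    unfolding Y_def by blast
  then obtain s where s: "\<And>v. v \<in> Y \<Longrightarrow> s v \<in> \<beta> v \<inter> X"
    using bchoice[of Y "\<lambda>v x. x \<in> \<beta> v \<inter> X"] by blast
  have "inj_on s Y"
  proof (rule inj_onI)
    fix u v assume "u \<in> Y" "v \<in> Y" "s u = s v"
    with s have "\<beta> u \<inter> \<beta> v \<noteq> {}"
      by (metis IntD1 disjoint_iff)
    moreover have "u \<in> fst H" "v \<in> fst H"
      using \<open>u \<in> Y\<close> \<open>v \<in> Y\<close> unfolding Y_def by auto
    ultimately show "u = v"
      using minor_modelD(2)[OF \<beta>] by metis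
  qed
  moreover have "s ` Y \<subseteq> X"
    using s by blast
  ultimately show ?thesis
    using \<open>finite X\<close> card_inj_on_le[of s Y X] finite_imageD[of s Y] finite_subset[of "s ` Y" X]
    unfolding Y_def[symmetric] by blast
qed

lemma branch_sets_in_component_avoiding:
  assumes \<beta>: "minor_model H \<beta> G" and H: "is_graph H"
    and x: "x \<in> fst H" "\<beta> x \<inter> X = {}" and a: "a \<in> \<beta> x"
    and w: "w \<in> component_avoiding H {v \<in> fst H. \<beta> v \<inter> X \<noteq> {}} x"
  shows "w \<in> fst H \<and> \<beta> w \<subseteq> component_avoiding G X a"
  using w
proof (induction rule: component_avoiding_induct)
  case base
  show ?case
    using connected_in_subset_component_avoiding[OF minor_modelD(1)[OF \<beta> x(1)] x(2) a]
      component_avoiding_self x(1) by blast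
next
  case (step u v)
  then have u: "u \<in> fst H" "\<beta> u \<subseteq> component_avoiding G X a" "\<beta> u \<inter> X = {}"
    by auto
  have v: "v \<in> fst H" "\<beta> v \<inter> X = {}"
    using step(3) is_graph_edgeD[OF H step(4)] by auto
  obtain p q where pq: "p \<in> \<beta> u" "q \<in> \<beta> v" "snd G p q"
    using minor_modelD(3)[OF \<beta> u(1) v(1) step(4)] by blast
  have "q \<in> component_avoiding G X a"
    using component_avoiding_step[of p G X a q] pq u(2,3) v(2) by blast
  then show ?case
    using connected_in_subset_component_avoiding[OF minor_modelD(1)[OF \<beta> v(1)] v(2) pq(2)] v(1)
    by blast
qed

lemma is_minor_component_avoiding:
  assumes \<beta>: "minor_model H \<beta> G" and H: "is_graph H"
    and x: "x \<in> fst H" "\<beta> x \<inter> X = {}" and a: "a \<in> \<beta> x"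
  shows "is_minor (induced H (component_avoiding H {v \<in> fst H. \<beta> v \<inter> X \<noteq> {}} x))
                  (induced G (component_avoiding G X a))"
proof -
  define C where "C = component_avoiding H {v \<in> fst H. \<beta> v \<inter> X \<noteq> {}} x"
  define D where "D = component_avoiding G X a"
  have inside: "w \<in> fst H" "\<beta> w \<subseteq> D" if "w \<in> C" for w
    using branch_sets_in_component_avoiding[OF assms] that unfolding C_def D_def by blast+
  have "minor_model (induced H C) \<beta> (induced G D)"
    unfolding minor_model_def
  proof (intro conjI ballI impI)
    fix v assume "v \<in> fst (induced H C)"
    then show "connected_in (induced G D) (\<beta> v)"
      using connected_in_induced minor_modelD(1)[OF \<beta>] inside by (simp add: induced_def)
  next
    fix u v assume "u \<in> fst (induced H C)" "v \<in> fst (induced H C)" "u \<noteq> v"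
    then show "\<beta> u \<inter> \<beta> v = {}"
      using minor_modelD(2)[OF \<beta>] inside by (simp add: induced_def)
  next
    fix u v assume uv: "u \<in> fst (induced H C)" "v \<in> fst (induced H C)" "snd (induced H C) u v"
    then have "u \<in> C" "v \<in> C" "snd H u v"
      by (auto simp: induced_def)
    then obtain p q where "p \<in> \<beta> u" "q \<in> \<beta> v" "snd G p q"
      using minor_modelD(3)[OF \<beta>] inside by blast
    with inside(2)[OF \<open>u \<in> C\<close>] inside(2)[OF \<open>v \<in> C\<close>]
    show "\<exists>p\<in>\<beta> u. \<exists>q\<in>\<beta> v. snd (induced G D) p q"
      unfolding induced_def by auto
  qed
  then show ?thesis
    unfolding is_minor_iff_minor_model C_def D_def by blast
qed

lemma dissectable_minor:
  assumes "dissectable G" "is_graph H" "is_minor H G"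
  shows "dissectable H"
  using assms
proof (induction arbitrary: H rule: dissectable.induct)
  case (1 G X)
  then obtain \<beta> where \<beta>: "minor_model H \<beta> G"
    unfolding is_minor_iff_minor_model by blast
  define Y where "Y = {v \<in> fst H. \<beta> v \<inter> X \<noteq> {}}"
  have "finite Y"
    using finite_branch_sets_meeting[OF \<beta> \<open>finite X\<close>] unfolding Y_def by blast
  then show ?case
  proof (rule dissectable.intros[OF \<open>is_graph H\<close>])
    fix x assume x: "x \<in> fst H" "x \<notin> Y"
    then obtain a where a: "a \<in> \<beta> x"
      using minor_modelD(1)[OF \<beta>] unfolding connected_in_def by blast
    have "\<beta> x \<inter> X = {}"
      using x unfolding Y_def by blast
    moreover have "a \<in> fst G"
      using minor_modelD(1)[OF \<beta> x(1)] a unfolding connected_in_def by blast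
    ultimately show "dissectable (induced H (component_avoiding H Y x))"
      using 1(4) is_graph_induced[OF \<open>is_graph H\<close>] a
        is_minor_component_avoiding[OF \<beta> \<open>is_graph H\<close> x(1)] unfolding Y_def by blast
  qed
qed

lemma dissectable_if_components_minor:
  assumes "is_graph G" "finite X"
    and "\<And>x. x \<in> fst G \<Longrightarrow> x \<notin> X \<Longrightarrow>
           \<exists>K. dissectable K \<and> is_minor (induced G (component_avoiding G X x)) K"
  shows "dissectable G"
proof (rule dissectable.intros[OF assms(1,2)])
  fix x assume "x \<in> fst G" "x \<notin> X"
  then obtain K where "dissectable K" "is_minor (induced G (component_avoiding G X x)) K"
    using assms(3) by blast
  then show "dissectable (induced G (component_avoiding G X x))"
    using dissectable_minor is_graph_induced[OF assms(1)] by blast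
qed

definition disjoint_union :: "(nat \<Rightarrow> cgraph) \<Rightarrow> cgraph" where
  "disjoint_union f =
     ({n. snd (prod_decode n) \<in> fst (f (fst (prod_decode n)))},
      \<lambda>a b. fst (prod_decode a) = fst (prod_decode b) \<and>
            snd (f (fst (prod_decode a))) (snd (prod_decode a)) (snd (prod_decode b)))"

lemma is_graph_disjoint_union:
  assumes "\<And>i. is_graph (f i)"
  shows "is_graph (disjoint_union f)"
proof (rule is_graphI)
  fix a b assume "snd (disjoint_union f) a b"
  moreover have "is_graph (f (fst (prod_decode a)))"
    using assms .
  ultimately show
    "a \<in> fst (disjoint_union f) \<and> b \<in> fst (disjoint_union f) \<and> snd (disjoint_union f) b a"
    unfolding is_graph_def disjoint_union_def by auto
next
  fix a show "\<not> snd (disjoint_union f) a a"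
    using assms unfolding is_graph_def disjoint_union_def by auto
qed

lemma is_minor_disjoint_union: "is_minor (f i) (disjoint_union f)"
  by (rule is_minor_if_embedding[where h = "\<lambda>v. prod_encode (i, v)"])
    (auto simp: inj_on_def disjoint_union_def)

lemma dissectable_disjoint_union:
  assumes "\<And>i. dissectable (f i)"
  shows "dissectable (disjoint_union f)"
proof (rule dissectable_if_components_minor)
  show U: "is_graph (disjoint_union f)"
    using assms dissectable_is_graph is_graph_disjoint_union by blast
  show "finite {}" ..
  fix x assume "x \<in> fst (disjoint_union f)"
  define i where "i = fst (prod_decode x)"
  define C where "C = component_avoiding (disjoint_union f) {} x"
  have in_block: "y \<in> fst (disjoint_union f) \<and> fst (prod_decode y) = i" if "y \<in> C" for y
    using that unfolding C_def
  proof (induction rule: component_avoiding_induct)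
    case base
    show ?case using \<open>x \<in> fst (disjoint_union f)\<close> i_def by blast
  next
    case (step u v)
    then show ?case
      using is_graph_edgeD[OF U step(4)] by (simp add: disjoint_union_def)
  qed
  have "is_minor (induced (disjoint_union f) C) (f i)"
  proof (rule is_minor_if_embedding[where h = "\<lambda>y. snd (prod_decode y)"])
    show "inj_on (\<lambda>y. snd (prod_decode y)) (fst (induced (disjoint_union f) C))"
    proof (rule inj_onI)
      fix y z assume "y \<in> fst (induced (disjoint_union f) C)" "z \<in> fst (induced (disjoint_union f) C)"
        and "snd (prod_decode y) = snd (prod_decode z)"
      with in_block have "prod_decode y = prod_decode z"
        by (simp add: induced_def prod_eq_iff)
      then show "y = z" by simp
    qed
  qed (use in_block in \<open>auto simp: induced_def disjoint_union_def\<close>)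
  then show "\<exists>K. dissectable K \<and>
      is_minor (induced (disjoint_union f) (component_avoiding (disjoint_union f) {} x)) K"
    using assms unfolding C_def by blast
qed

definition hub_join :: "nat \<Rightarrow> cgraph \<Rightarrow> cgraph" where
  "hub_join k G =
     ((\<lambda>i. 2 * i) ` {..k} \<union> (\<lambda>v. Suc (2 * v)) ` fst G,
      \<lambda>a b. a \<in> (\<lambda>i. 2 * i) ` {..k} \<and> b \<in> (\<lambda>v. Suc (2 * v)) ` fst G \<or>
            a \<in> (\<lambda>v. Suc (2 * v)) ` fst G \<and> b \<in> (\<lambda>i. 2 * i) ` {..k} \<or>
            odd a \<and> odd b \<and> snd G (a div 2) (b div 2))"

lemma odd_mem_image_Suc_double:
  "odd (a :: nat) \<Longrightarrow> a div 2 \<in> V \<Longrightarrow> a \<in> (\<lambda>v. Suc (2 * v)) ` V"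
  by (rule image_eqI[of _ _ "a div 2"]) simp_all

lemma is_graph_hub_join:
  assumes "is_graph G"
  shows "is_graph (hub_join k G)"
proof (rule is_graphI)
  fix a b assume "snd (hub_join k G) a b"
  then consider "a \<in> (\<lambda>i. 2 * i) ` {..k}" "b \<in> (\<lambda>v. Suc (2 * v)) ` fst G"
    | "a \<in> (\<lambda>v. Suc (2 * v)) ` fst G" "b \<in> (\<lambda>i. 2 * i) ` {..k}"
    | "odd a" "odd b" "snd G (a div 2) (b div 2)"
    unfolding hub_join_def by auto
  then show "a \<in> fst (hub_join k G) \<and> b \<in> fst (hub_join k G) \<and> snd (hub_join k G) b a"
  proof cases
    case 3
    with assms have "a \<in> (\<lambda>v. Suc (2 * v)) ` fst G" "b \<in> (\<lambda>v. Suc (2 * v)) ` fst G"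
      using odd_mem_image_Suc_double is_graph_edgeD by blast+
    with 3 assms show ?thesis
      unfolding hub_join_def is_graph_def by auto
  qed (auto simp: hub_join_def)
next
  fix a show "\<not> snd (hub_join k G) a a"
    using assms unfolding hub_join_def is_graph_def
    by (auto simp: Suc_double_not_eq_double double_not_eq_Suc_double)
qed

lemma dissectable_hub_join:
  assumes "dissectable G"
  shows "dissectable (hub_join k G)"
proof (rule dissectable_if_components_minor)
  have G: "is_graph G"
    using assms by (rule dissectable_is_graph)
  then show "is_graph (hub_join k G)"
    by (rule is_graph_hub_join)
  show "finite ((\<lambda>i. 2 * i) ` {..k})"
    by simp
  fix x assume x: "x \<in> fst (hub_join k G)" "x \<notin> (\<lambda>i. 2 * i) ` {..k}"
  define C where "C = component_avoiding (hub_join k G) ((\<lambda>i. 2 * i) ` {..k}) x"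
  have in_copy: "y \<in> (\<lambda>v. Suc (2 * v)) ` fst G" if "y \<in> C" for y
    using that unfolding C_def
  proof (induction rule: component_avoiding_induct)
    case base
    show ?case using x by (simp add: hub_join_def)
  next
    case (step u v)
    then have "odd v" "snd G (u div 2) (v div 2)"
      by (auto simp: hub_join_def Suc_double_not_eq_double)
    then show ?case
      using is_graph_edgeD[OF G] odd_mem_image_Suc_double by blast
  qed
  have "is_minor (induced (hub_join k G) C) G"
  proof (rule is_minor_if_embedding[where h = "\<lambda>y. y div 2"])
    show "inj_on (\<lambda>y. y div 2) (fst (induced (hub_join k G) C))"
    proof (rule inj_onI)
      fix y z assume "y \<in> fst (induced (hub_join k G) C)" "z \<in> fst (induced (hub_join k G) C)"
        and "y div 2 = z div 2"
      moreover obtain v w where "y = Suc (2 * v)" "z = Suc (2 * w)"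
        using in_copy[of y] in_copy[of z] calculation(1,2) by (force simp: induced_def)
      ultimately show "y = z" by simp
    qed
    show "(\<lambda>y. y div 2) ` fst (induced (hub_join k G) C) \<subseteq> fst G"
      using in_copy by (force simp: induced_def)
    fix u v assume "u \<in> fst (induced (hub_join k G) C)" "v \<in> fst (induced (hub_join k G) C)"
      and "snd (induced (hub_join k G) C) u v"
    moreover have "u \<in> (\<lambda>v. Suc (2 * v)) ` fst G" "v \<in> (\<lambda>v. Suc (2 * v)) ` fst G"
      using in_copy calculation(1,2) by (simp_all add: induced_def)
    ultimately show "snd G (u div 2) (v div 2)"
      by (auto simp: induced_def hub_join_def Suc_double_not_eq_double)
  qed
  then show "\<exists>K. dissectable K \<and>
      is_minor (induced (hub_join k G) (component_avoiding (hub_join k G) ((\<lambda>i. 2 * i) ` {..k}) x)) K"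
    using assms unfolding C_def by blast
qed

lemma ex_double_not_in:
  assumes "finite Y" "card Y \<le> k"
  shows "\<exists>i\<le>k. 2 * i \<notin> Y"
proof (rule ccontr)
  assume "\<not> ?thesis"
  then have "(\<lambda>i. 2 * i) ` {..k} \<subseteq> Y"
    by auto
  then have "card ((\<lambda>i. 2 * i) ` {..k}) \<le> card Y"
    using \<open>finite Y\<close> by (rule card_mono[rotated])
  moreover have "card ((\<lambda>i. 2 * i) ` {..k}) = Suc k"
    by (subst card_image) (auto simp: inj_on_def)
  ultimately show False
    using \<open>card Y \<le> k\<close> by simp
qed

lemma ex_hub_join_block_avoiding:
  assumes "finite Y"
  shows "\<exists>m. \<forall>v. Suc (2 * prod_encode (prod_encode (a, m), v)) \<notin> Y"
proof -
  have "infinite (range (\<lambda>m. prod_encode (a, m)))"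
    by (rule range_inj_infinite) (simp add: inj_def)
  moreover have "finite ((\<lambda>y. fst (prod_decode (y div 2))) ` Y)"
    using assms by (rule finite_imageI)
  ultimately have "\<not> range (\<lambda>m. prod_encode (a, m)) \<subseteq> (\<lambda>y. fst (prod_decode (y div 2))) ` Y"
    using finite_subset by blast
  then obtain m where m: "prod_encode (a, m) \<notin> (\<lambda>y. fst (prod_decode (y div 2))) ` Y"
    by blast
  show ?thesis
  proof (intro exI allI notI)
    fix v assume "Suc (2 * prod_encode (prod_encode (a, m), v)) \<in> Y"
    then have "fst (prod_decode (Suc (2 * prod_encode (prod_encode (a, m), v)) div 2))
        \<in> (\<lambda>y. fst (prod_decode (y div 2))) ` Y"
      by (rule imageI)
    with m show False
      by simp
  qed
qed

lemma is_minor_component_hub_join: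
  assumes "i \<le> k" "2 * i \<notin> Y" and block: "\<And>v. Suc (2 * prod_encode (n, v)) \<notin> Y"
  shows "is_minor (f n)
           (induced (hub_join k (disjoint_union f))
              (component_avoiding (hub_join k (disjoint_union f)) Y (2 * i)))"
proof (rule is_minor_if_embedding[where h = "\<lambda>v. Suc (2 * prod_encode (n, v))"])
  let ?G = "hub_join k (disjoint_union f)"
  have in_component: "Suc (2 * prod_encode (n, v)) \<in> component_avoiding ?G Y (2 * i)"
    if "v \<in> fst (f n)" for v
  proof (rule component_avoiding_step[OF component_avoiding_self \<open>2 * i \<notin> Y\<close> block])
    show "snd ?G (2 * i) (Suc (2 * prod_encode (n, v)))"
      using \<open>i \<le> k\<close> that unfolding hub_join_def disjoint_union_def by force
  qed
  show "inj_on (\<lambda>v. Suc (2 * prod_encode (n, v))) (fst (f n))"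
    by (simp add: inj_on_def)
  show "(\<lambda>v. Suc (2 * prod_encode (n, v))) ` fst (f n) \<subseteq>
      fst (induced ?G (component_avoiding ?G Y (2 * i)))"
    using in_component by (auto simp: induced_def)
  fix u v assume "u \<in> fst (f n)" "v \<in> fst (f n)" "snd (f n) u v"
  then show "snd (induced ?G (component_avoiding ?G Y (2 * i)))
               (Suc (2 * prod_encode (n, u))) (Suc (2 * prod_encode (n, v)))"
    using in_component by (simp add: induced_def hub_join_def disjoint_union_def)
qed

text \<open>If \<open>W - X\<close> has components \<open>W\<^sub>x\<close> and \<open>G\<^sub>x\<close> is not a minor of \<open>W\<^sub>x\<close>, then attach \<open>card X + 1\<close>
  hubs to infinitely many copies of every \<open>G\<^sub>x\<close>.  In a model in \<open>W\<close>, one hub and one copy of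
  each \<open>G\<^sub>x\<close> avoid \<open>X\<close>, and the hub ties the copy of \<open>G\<^sub>a\<close>, for \<open>a\<close> in the hub's branch set,
  into the component \<open>W\<^sub>a\<close>.\<close>

lemma ex_dissectable_not_minor:
  assumes "dissectable W"
  shows "\<exists>G. dissectable G \<and> \<not> is_minor G W"
  using assms
proof (induction rule: dissectable.induct)
  case (1 W X)
  define part where "part x = induced W (component_avoiding W X x)" for x
  have "\<exists>G. dissectable G \<and> (x \<in> fst W \<and> x \<notin> X \<longrightarrow> \<not> is_minor G (part x))" for x
    using 1(4)[of x] dissectable_empty_graph unfolding part_def
    by (cases "x \<in> fst W \<and> x \<notin> X") blast+
  then obtain g where "\<forall>x. dissectable (g x) \<and> (x \<in> fst W \<and> x \<notin> X \<longrightarrow> \<not> is_minor (g x) (part x))"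
    using choice[where Q = "\<lambda>x G. dissectable G \<and> (x \<in> fst W \<and> x \<notin> X \<longrightarrow> \<not> is_minor G (part x))"]
    by blast
  then have g: "\<And>x. dissectable (g x)"
    and g_not_minor: "\<And>x. x \<in> fst W \<Longrightarrow> x \<notin> X \<Longrightarrow> \<not> is_minor (g x) (part x)"
    by blast+
  define k where "k = card X"
  define G where "G = hub_join k (disjoint_union (\<lambda>n. g (fst (prod_decode n))))"
  have G_graph: "is_graph G"
    unfolding G_def using g by (intro is_graph_hub_join is_graph_disjoint_union dissectable_is_graph)
  have "\<not> is_minor G W"
  proof
    assume "is_minor G W"
    then obtain \<beta> where \<beta>: "minor_model G \<beta> W"
      unfolding is_minor_iff_minor_model by blast
    define Y where "Y = {v \<in> fst G. \<beta> v \<inter> X \<noteq> {}}"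
    have "finite Y" "card Y \<le> k"
      using finite_branch_sets_meeting[OF \<beta> \<open>finite X\<close>] unfolding Y_def k_def by blast+
    then obtain i where i: "i \<le> k" "2 * i \<notin> Y"
      using ex_double_not_in by blast
    have hub: "2 * i \<in> fst G"
      using i(1) by (simp add: G_def hub_join_def)
    then obtain a where a: "a \<in> \<beta> (2 * i)"
      using minor_modelD(1)[OF \<beta>] unfolding connected_in_def by blast
    have hub_X: "\<beta> (2 * i) \<inter> X = {}"
      using hub i(2) unfolding Y_def by blast
    have "a \<in> fst W" "a \<notin> X"
      using minor_modelD(1)[OF \<beta> hub] a hub_X unfolding connected_in_def by blast+
    obtain m where "\<And>v. Suc (2 * prod_encode (prod_encode (a, m), v)) \<notin> Y"
      using ex_hub_join_block_avoiding[OF \<open>finite Y\<close>] by blast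
    then have "is_minor (g a) (induced G (component_avoiding G Y (2 * i)))"
      using is_minor_component_hub_join[OF i, of "prod_encode (a, m)" "\<lambda>n. g (fst (prod_decode n))"]
      unfolding G_def by simp
    also have "is_minor \<dots> (part a)"
      using is_minor_component_avoiding[OF \<beta> G_graph hub hub_X a] unfolding Y_def part_def .
    finally show False
      using g_not_minor \<open>a \<in> fst W\<close> \<open>a \<notin> X\<close> by blast
  qed
  moreover have "dissectable G"
    unfolding G_def using g by (intro dissectable_hub_join dissectable_disjoint_union)
  ultimately show ?case
    by blast
qed

lemma ex_dissectable_not_minor_of_countable:
  assumes "countable F" "F \<subseteq> Collect dissectable"
  shows "\<exists>W. dissectable W \<and> (\<forall>V\<in>F. \<not> is_minor W V)"
proof (cases "F = {}")
  case True
  then show ?thesis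
    using dissectable_empty_graph by blast
next
  case False
  define f where "f = from_nat_into F"
  have range_f: "range f = F"
    unfolding f_def using range_from_nat_into[OF False assms(1)] .
  then have "dissectable (disjoint_union f)"
    using assms(2) by (intro dissectable_disjoint_union) auto
  then obtain W where "dissectable W" "\<not> is_minor W (disjoint_union f)"
    using ex_dissectable_not_minor by blast
  moreover have "\<not> is_minor W V" if "V \<in> F" for V
  proof
    obtain i where "V = f i"
      using \<open>V \<in> F\<close> range_f by blast
    assume "is_minor W V"
    also have "is_minor V (disjoint_union f)"
      unfolding \<open>V = f i\<close> by (rule is_minor_disjoint_union)
    finally show False
      using \<open>\<not> is_minor W (disjoint_union f)\<close> by blast
  qed
  ultimately show ?thesis
    by blast
qed

lemma uncountable_if_dissectable_dominated:
  assumes covers: "\<And>W. dissectable W \<Longrightarrow> \<Phi> W \<in> K \<and> W \<in> \<Phi> W"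
    and dominated: "\<And>W. dissectable W \<Longrightarrow>
           \<exists>F. countable F \<and> F \<subseteq> Collect dissectable \<and> (\<forall>G\<in>\<Phi> W. \<exists>V\<in>F. is_minor G V)"
  shows "uncountable K"
proof
  assume "countable K"
  define \<C> where "\<C> = \<Phi> ` Collect dissectable"
  have "\<C> \<subseteq> K"
    using covers unfolding \<C>_def by blast
  with \<open>countable K\<close> have "countable \<C>"
    by (rule countable_subset[rotated])
  have "\<forall>C\<in>\<C>. \<exists>F. countable F \<and> F \<subseteq> Collect dissectable \<and> (\<forall>G\<in>C. \<exists>V\<in>F. is_minor G V)"
    using dominated unfolding \<C>_def by blast
  then obtain F where F: "\<forall>C\<in>\<C>.
      countable (F C) \<and> F C \<subseteq> Collect dissectable \<and> (\<forall>G\<in>C. \<exists>V\<in>F C. is_minor G V)"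
    by (rule bchoice[elim_format]) blast
  have "countable (\<Union>(F ` \<C>))"
    using \<open>countable \<C>\<close> F by (intro countable_UN) blast+
  moreover have "\<Union>(F ` \<C>) \<subseteq> Collect dissectable"
    using F by blast
  ultimately
  obtain W where W: "dissectable W" "\<forall>V\<in>\<Union>(F ` \<C>). \<not> is_minor W V"
    using ex_dissectable_not_minor_of_countable by blast
  then have "\<Phi> W \<in> \<C>" "W \<in> \<Phi> W"
    using covers unfolding \<C>_def by blast+
  then show False
    using F W(2) by blast
qed

definition minors_of :: "cgraph \<Rightarrow> cgraph set" where
  "minors_of G = {H. is_graph H \<and> is_minor H G}"

lemma minor_closed_minors_of: "minor_closed (minors_of G)"
  unfolding minor_closed_def minors_of_def using is_minor_trans by blast

lemma self_mem_minors_of: "is_graph G \<Longrightarrow> G \<in> minors_of G"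
  unfolding minors_of_def using is_minor_refl by blast

lemma has_universal_minors_of: "is_graph G \<Longrightarrow> has_universal (minors_of G)"
  unfolding has_universal_def by (rule bexI[OF _ self_mem_minors_of]) (simp_all add: minors_of_def)

lemma minor_closed_UN: "(\<And>i. minor_closed (C i)) \<Longrightarrow> minor_closed (\<Union>i. C i)"
  unfolding minor_closed_def by blast

lemma not_has_universal_UN_minors_of:
  assumes "\<And>n. is_graph (s n)" and "\<And>n. \<not> is_minor (s (Suc n)) (s n)"
  shows "\<not> has_universal (\<Union>n. minors_of (s n))"
proof
  assume "has_universal (\<Union>n. minors_of (s n))"
  then obtain U n where "is_minor U (s n)" "\<forall>G\<in>(\<Union>n. minors_of (s n)). is_minor G U"
    unfolding has_universal_def minors_of_def by blast
  moreover have "s (Suc n) \<in> (\<Union>n. minors_of (s n))"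
    using self_mem_minors_of[OF assms(1)] by blast
  ultimately show False
    using assms(2) is_minor_trans by blast
qed

definition escape :: "cgraph \<Rightarrow> cgraph" where
  "escape W = (SOME G. dissectable G \<and> \<not> is_minor G W)"

lemma escape: "dissectable W \<Longrightarrow> dissectable (escape W) \<and> \<not> is_minor (escape W) W"
  unfolding escape_def by (rule someI_ex) (rule ex_dissectable_not_minor)

lemma dissectable_funpow_escape: "dissectable W \<Longrightarrow> dissectable ((escape ^^ n) W)"
  by (induction n) (simp_all add: escape)

definition minors_of_escapes :: "cgraph \<Rightarrow> cgraph set" where
  "minors_of_escapes W = (\<Union>n. minors_of ((escape ^^ n) W))"

lemma minor_closed_minors_of_escapes: "minor_closed (minors_of_escapes W)"
  unfolding minors_of_escapes_def by (intro minor_closed_UN minor_closed_minors_of)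

lemma self_mem_minors_of_escapes: "is_graph W \<Longrightarrow> W \<in> minors_of_escapes W"
  unfolding minors_of_escapes_def using self_mem_minors_of[of W] by (metis UNIV_I UN_I funpow_0)

lemma not_has_universal_minors_of_escapes:
  assumes "dissectable W"
  shows "\<not> has_universal (minors_of_escapes W)"
  unfolding minors_of_escapes_def
proof (rule not_has_universal_UN_minors_of)
  fix n
  have "dissectable ((escape ^^ n) W)"
    using assms by (rule dissectable_funpow_escape)
  then show "is_graph ((escape ^^ n) W)" "\<not> is_minor ((escape ^^ Suc n) W) ((escape ^^ n) W)"
    using dissectable_is_graph escape by simp_all
qed

theorem theorem1p7:
  shows "uncountable {C. minor_closed C \<and> has_universal C} \<and>
         uncountable {C. minor_closed C \<and> \<not> has_universal C}"
proof
  show "uncountable {C. minor_closed C \<and> has_universal C}"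
  proof (rule uncountable_if_dissectable_dominated[where \<Phi> = minors_of])
    fix W assume "dissectable W"
    then show "minors_of W \<in> {C. minor_closed C \<and> has_universal C} \<and> W \<in> minors_of W"
      using minor_closed_minors_of has_universal_minors_of self_mem_minors_of dissectable_is_graph
      by blast
    show "\<exists>F. countable F \<and> F \<subseteq> Collect dissectable \<and> (\<forall>G\<in>minors_of W. \<exists>V\<in>F. is_minor G V)"
      using \<open>dissectable W\<close> by (intro exI[of _ "{W}"]) (simp add: minors_of_def)
  qed
  show "uncountable {C. minor_closed C \<and> \<not> has_universal C}"
  proof (rule uncountable_if_dissectable_dominated[where \<Phi> = minors_of_escapes])
    fix W assume "dissectable W"
    then show "minors_of_escapes W \<in> {C. minor_closed C \<and> \<not> has_universal C} \<and> W \<in> minors_of_escapes W"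
      using minor_closed_minors_of_escapes not_has_universal_minors_of_escapes
        self_mem_minors_of_escapes dissectable_is_graph by blast
    show "\<exists>F. countable F \<and> F \<subseteq> Collect dissectable \<and>
        (\<forall>G\<in>minors_of_escapes W. \<exists>V\<in>F. is_minor G V)"
      using dissectable_funpow_escape[OF \<open>dissectable W\<close>]
      by (intro exI[of _ "range (\<lambda>n. (escape ^^ n) W)"]) (auto simp: minors_of_escapes_def minors_of_def)
  qed
qed

end
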